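(* There exist infinitely many distinct rational numbers $r>1$ such that, for each of them, there is a circle $(x-h)^2+y^2=a^2$ with $h,a\in\mathbb{Q}$, $a>0$, carrying four rational points $P_i=(x_i,y_i)$, $i=1,\dots,4$, none of which lies on the $x$-axis, with $x_i>0$ and $x_{i+1}=r\,x_i$ for $i=1,2,3$, and such that $P_1$ and $P_4$ are symmetric with respect to the diameter of the circle parallel to the $y$-axis, i.e. $x_1+x_4=2h$ and $y_1=y_4$.
   Context: Rational points are points with both coordinates in $\mathbb{Q}$. *)

theory Defs
  imports Complex_Main
begin

definition good_ratio :: "rat \<Rightarrow> bool" where
  "good_ratio r \<longleftrightarrow> (\<exists>h a :: rat. a > 0 \<and> (\<exists>x y :: nat \<Rightarrow> rat.
      (\<forall>i\<in>{1..4}. (x i - h)^2 + (y i)^2 = a^2 \<and> y i \<noteq> 0 \<and> x i > 0) \<and>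
      (\<forall>i\<in>{1..3}. x (i+1) = r * x i) \<and>
      x 1 + x 4 = 2 * h \<and> y 1 = y 4))"

end

(*
  For r > 1 such that r^2 + r + 4 = u^2 and 4 r^2 + r + 1 = v^2 are rational squares, the
  circle with centre h = (1 + r^3)/2 and radius a = 5 (r^3 - 1)/6 carries the points with
  abscissae 1, r, r^2, r^3 and ordinates 2 (r^3 - 1)/3, (r - 1)(2r + 1)u/3, (r - 1)(r + 2)v/3,
  2 (r^3 - 1)/3.  Since r \<mapsto> 1/r swaps the two conditions, it suffices to find infinitely
  many r > 0, r \<noteq> 1.

  The pairs (u, v) are governed by the elliptic curve W: y^2 = x^3 + 63 x^2 + 96 x - 160: every
  rational point of W with 4 < x < 76 yields such an r, and each r accounts for only finitely
  many x.  Doubling P = (-11/4, 45/8) repeatedly gives points 2^n P (n \<ge> 1) whose abscissae x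
  satisfy v_2(x - 26) = -2(n + 1); if x lies outside (4, 76), adding (26, 250) or (26, -250)
  brings it inside and changes the valuation to n + 3.  So the arc 4 < x < 76 of W contains
  infinitely many rational points, and there are infinitely many good r.
*)
theory Submission
  imports Defs "HOL-Computational_Algebra.Polynomial"
begin

section \<open>Circles from pairs of squares\<close>

definition ratio_squares :: "rat \<Rightarrow> bool" where
  "ratio_squares r \<longleftrightarrow> (\<exists>u v :: rat. u^2 = r^2 + r + 4 \<and> v^2 = 4*r^2 + r + 1)"

lemma good_ratio_if_ratio_squares:
  fixes r :: rat
  assumes r1: "r > 1" and sq: "ratio_squares r"
  shows "good_ratio r"
proof -
  obtain u v where hu: "u^2 = r^2 + r + 4" and hv: "v^2 = 4*r^2 + r + 1"
    using sq unfolding ratio_squares_def by blast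
  define h where "h = (1 + r^3)/2"
  define a where "a = 5/6*(r^3 - 1)"
  define x where "x = (\<lambda>i::nat. r^(i-1))"
  define y where "y = (\<lambda>i::nat. if i = 2 then (r-1)*(2*r+1)*u/3
                          else if i = 3 then (r-1)*(r+2)*v/3 else 2/3*(r^3-1))"
  have r3: "r^3 - 1 > 0" using r1 by (simp add: one_less_power)
  have "u^2 > 0" "v^2 > 0" unfolding hu hv using r1 by (simp_all add: add_pos_pos)
  then have "u \<noteq> 0" "v \<noteq> 0" by auto
  moreover have "r^3 \<noteq> 1" using r3 by simp
  ultimately have y_nz: "y i \<noteq> 0" for i unfolding y_def using r1 by (simp split: if_splits)
  have "(y 2)^2 = (r-1)^2*(2*r+1)^2*(r^2+r+4)/9"
    unfolding y_def by (simp add: power_mult_distrib power_divide hu[symmetric])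
  then have c2: "(x 2 - h)^2 + (y 2)^2 = a^2"
    unfolding x_def h_def a_def by (simp add: field_simps; algebra)
  have "(y 3)^2 = (r-1)^2*(r+2)^2*(4*r^2+r+1)/9"
    unfolding y_def by (simp add: power_mult_distrib power_divide hv[symmetric])
  then have c3: "(x 3 - h)^2 + (y 3)^2 = a^2"
    unfolding x_def h_def a_def by (simp add: field_simps; algebra)
  have c1: "(x 1 - h)^2 + (y 1)^2 = a^2"
    unfolding x_def y_def h_def a_def
    by (simp add: power2_eq_square power3_eq_cube field_simps; algebra)
  have c4: "(x 4 - h)^2 + (y 4)^2 = a^2"
    unfolding x_def y_def h_def a_def by (simp add: field_simps; algebra)
  have on_circle: "(x i - h)^2 + (y i)^2 = a^2" if "i \<in> {1,2,3,4}" for i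
    using that c1 c2 c3 c4 by blast
  have "x i > 0" for i unfolding x_def using r1 by simp
  moreover have "{1..4::nat} = {1,2,3,4}" by auto
  ultimately have "\<forall>i\<in>{1..4}. (x i - h)^2 + (y i)^2 = a^2 \<and> y i \<noteq> 0 \<and> x i > 0"
    using on_circle y_nz by simp
  moreover have "\<forall>i\<in>{1..3}. x (i+1) = r * x i"
    unfolding x_def by (auto simp: power_Suc[symmetric] Suc_diff_le)
  moreover have "x 1 + x 4 = 2 * h" "y 1 = y 4" unfolding x_def h_def y_def by simp_all
  moreover have "a > 0" unfolding a_def using r3 by simp
  ultimately show ?thesis unfolding good_ratio_def by blast
qed

lemma ratio_squares_inverse:
  fixes r :: rat
  assumes "r \<noteq> 0" "ratio_squares r"
  shows "ratio_squares (1/r)"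
proof -
  obtain u v where hu: "u^2 = r^2 + r + 4" and hv: "v^2 = 4*r^2 + r + 1"
    using assms(2) unfolding ratio_squares_def by blast
  have "(v/r)^2 = (4*r^2 + r + 1)/r^2" "(u/r)^2 = (r^2 + r + 4)/r^2"
    by (simp_all add: power_divide hu hv)
  then have "(v/r)^2 = (1/r)^2 + 1/r + 4" "(u/r)^2 = 4*(1/r)^2 + 1/r + 1"
    using assms(1) by (simp_all add: field_simps power2_eq_square)
  then show ?thesis unfolding ratio_squares_def by blast
qed

lemma rat_square_ne_6: "(u::rat)^2 \<noteq> 6"
proof
  assume h: "u^2 = 6"
  obtain p q where pq: "quotient_of u = (p, q)" by (cases "quotient_of u")
  have q0: "q > 0" using pq by (rule quotient_of_denom_pos)
  have cop: "coprime p q" using pq by (rule quotient_of_coprime)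
  have "u = of_int p / of_int q" using pq by (rule quotient_of_div)
  then have "(of_int p / of_int q :: rat)^2 = 6" using h by simp
  then have "(of_int p :: rat)^2 = 6 * (of_int q)^2" using q0 by (simp add: field_simps power_divide)
  then have e: "p^2 = 6*q^2" by (metis of_int_eq_iff of_int_mult of_int_numeral of_int_power)
  then have "even (p^2)" by simp
  then have ep: "even p" by simp
  then obtain k where "p = 2*k" by blast
  then have "2*k^2 = 3*q^2" using e by (simp add: power_mult_distrib)
  then have "even q" by (metis dvd_triv_left even_mult_iff odd_numeral even_power)
  then show False using cop ep by (metis coprime_common_divisor not_coprimeI odd_one)
qed

lemma not_ratio_squares_1: "\<not> ratio_squares 1"
  using rat_square_ne_6 unfolding ratio_squares_def by auto

section \<open>The curve W and its arc 4 < x < 76\<close>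

definition on_W :: "rat \<Rightarrow> rat \<Rightarrow> bool" where
  "on_W x y \<longleftrightarrow> y^2 = x^3 + 63*x^2 + 96*x - 160"

definition W_arc :: "rat set" where
  "W_arc = {x. (\<exists>y. on_W x y) \<and> 4 < x \<and> x < 76}"

definition W_abscissae :: "rat \<Rightarrow> rat set" where
  "W_abscissae r =
    {8*t^2 + 28*t - 4*v*(1 - t^2) | t v. (1+r)*t^2 + 4*t - r = 0 \<and> v^2 = 4*r^2 + r + 1}"

lemma finite_quadratic_roots:
  fixes a b c :: "'a :: idom"
  assumes "a \<noteq> 0 \<or> b \<noteq> 0"
  shows "finite {t. a*t^2 + b*t + c = 0}"
proof -
  have "[:c, b, a:] \<noteq> 0" using assms by auto
  then have "finite {t. poly [:c, b, a:] t = 0}" by (rule poly_roots_finite)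
  then show ?thesis by (simp add: algebra_simps power2_eq_square)
qed

lemma finite_W_abscissae: "finite (W_abscissae r)"
proof -
  have "W_abscissae r \<subseteq> (\<lambda>(t,v). 8*t^2 + 28*t - 4*v*(1 - t^2)) `
      ({t. (1+r)*t^2 + 4*t + (-r) = 0} \<times> {v. 1*v^2 + 0*v + (-(4*r^2 + r + 1)) = 0})"
    unfolding W_abscissae_def by (auto simp: image_iff)
  moreover have "finite {t. (1+r)*t^2 + 4*t + (-r) = 0}"
    and "finite {v. 1*v^2 + 0*v + (-(4*r^2 + r + 1)) = 0}"
    by (rule finite_quadratic_roots; simp)+
  ultimately show ?thesis by (meson finite_SigmaI finite_imageI finite_subset)
qed

lemma W_arc_sign:
  fixes x y :: rat
  assumes W: "on_W x y" and x4: "4 < x" and x76: "x < 76"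
  shows "(x^2 + 136*x + 88 + 18*y) * (x^2 - 8*x + 232 - 6*y) < 0"
proof -
  have cur: "y^2 = x^3 + 63*x^2 + 96*x - 160" using W unfolding on_W_def .
  have D1: "(x^2 + 136*x + 88 + 18*y) * (x^2 + 136*x + 88 - 18*y) = (x-4)*(x-76)*(x+14)^2"
    and D2: "(x^2 - 8*x + 232 - 6*y) * (x^2 - 8*x + 232 + 6*y) = (x-4)*(x-76)*(x+14)^2"
    using cur by algebra+
  have "(x-4)*(x-76) < 0" using x4 x76 by (simp add: mult_pos_neg)
  then have neg: "(x-4)*(x-76)*(x+14)^2 < 0" using x4 by (simp add: mult_neg_pos)
  have xpos: "x^2 > 0" "x^3 > 0" using x4 by simp_all
  have sq4: "x^2 - 8*x + 232 = (x-4)^2 + 216" by (simp add: power2_eq_square algebra_simps)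
  have "(x-4)^2 \<ge> 0" by simp
  have "y^2 > 0" unfolding cur using x4 xpos by linarith
  then consider "y > 0" | "y < 0" by (cases "y > 0") auto
  then show ?thesis
  proof cases
    case 1
    then have "x^2 - 8*x + 232 + 6*y > 0" using sq4 \<open>(x-4)^2 \<ge> 0\<close> by linarith
    then have "x^2 - 8*x + 232 - 6*y < 0" using D2 neg by (metis mult_less_0_iff not_less_iff_gr_or_eq)
    moreover have "x^2 + 136*x + 88 + 18*y > 0" using 1 x4 xpos by linarith
    ultimately show ?thesis by (simp add: mult_pos_neg)
  next
    case 2
    then have "x^2 + 136*x + 88 - 18*y > 0" using x4 xpos by linarith
    then have "x^2 + 136*x + 88 + 18*y < 0" using D1 neg by (metis mult_less_0_iff not_less_iff_gr_or_eq)
    moreover have "x^2 - 8*x + 232 - 6*y > 0" using 2 sq4 \<open>(x-4)^2 \<ge> 0\<close> by linarith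
    ultimately show ?thesis by (simp add: mult_neg_pos)
  qed
qed

lemma W_arc_param_ratio_pos:
  fixes x y :: rat
  assumes W: "on_W x y" and x4: "4 < x" and x76: "x < 76"
  defines "t \<equiv> -(8 + 7*x + y)/(4*x + 56)"
  shows "1 - t^2 \<noteq> 0" and "t*(t+4)/(1 - t^2) > 0"
proof -
  have cur: "y^2 = x^3 + 63*x^2 + 96*x - 160" using W unfolding on_W_def .
  define d where "d = 4*x + 56"
  define \<alpha> where "\<alpha> = 8 + 7*x + y"
  define \<beta> where "\<beta> = 216 + 9*x - y"
  define \<gamma> where "\<gamma> = 64 + 11*x + y"
  define \<delta> where "\<delta> = 48 - 3*x - y"
  define E1 where "E1 = x^2 + 136*x + 88 + 18*y"
  define E2 where "E2 = x^2 - 8*x + 232 - 6*y"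
  have d0: "d > 0" unfolding d_def using x4 by simp
  have \<alpha>\<gamma>: "\<alpha>*\<gamma> = (x+4)*E1" and \<beta>\<delta>: "\<beta>*\<delta> = (x+44)*E2"
    unfolding \<alpha>_def \<beta>_def \<gamma>_def \<delta>_def E1_def E2_def using cur by algebra+
  have E12: "E1*E2 < 0" unfolding E1_def E2_def using W_arc_sign[OF W x4 x76] .
  then have "E1 \<noteq> 0" "E2 \<noteq> 0" by auto
  then have \<gamma>0: "\<gamma> \<noteq> 0" and \<delta>0: "\<delta> \<noteq> 0" using \<alpha>\<gamma> \<beta>\<delta> x4 by auto
  have \<alpha>\<beta>\<gamma>\<delta>: "(\<alpha>*\<gamma>)*(\<beta>*\<delta>) = (x+4)*(x+44)*(E1*E2)"
    unfolding \<alpha>\<gamma> \<beta>\<delta> by (simp add: algebra_simps)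
  have t: "t = -\<alpha>/d" "1 - t = \<gamma>/d" "1 + t = \<delta>/d" "t + 4 = \<beta>/d"
    unfolding t_def \<alpha>_def \<beta>_def \<gamma>_def \<delta>_def d_def using d0 by (simp_all add: d_def field_simps)
  have tt: "1 - t^2 = (\<gamma>*\<delta>)/d^2"
  proof -
    have "1 - t^2 = (1-t)*(1+t)" by (simp add: algebra_simps power2_eq_square)
    then show ?thesis using t by (simp add: power2_eq_square)
  qed
  then show "1 - t^2 \<noteq> 0" using \<gamma>0 \<delta>0 d0 by simp
  have "t*(t+4)/(1 - t^2) = -((\<alpha>*\<gamma>)*(\<beta>*\<delta>))/((\<gamma>*\<delta>)^2)"
    unfolding tt t(4) unfolding t(1) using d0 \<gamma>0 \<delta>0 by (simp add: field_simps power2_eq_square)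
  also have "\<dots> = -((x+4)*(x+44)*(E1*E2))/((\<gamma>*\<delta>)^2)" unfolding \<alpha>\<beta>\<gamma>\<delta> ..
  also have "\<dots> > 0"
  proof -
    have "(x+4)*(x+44)*(E1*E2) < 0" using E12 x4 by (simp add: mult_pos_neg)
    moreover have "(\<gamma>*\<delta>)^2 > 0" using \<gamma>0 \<delta>0 by simp
    ultimately show ?thesis by (simp add: divide_neg_pos)
  qed
  finally show "t*(t+4)/(1 - t^2) > 0" .
qed

lemma W_param_quartic:
  fixes x y :: rat
  assumes W: "on_W x y" and x14: "x \<noteq> -14"
  defines "t \<equiv> -(8 + 7*x + y)/(4*x + 56)"
  shows "(8*t^2 + 28*t - x)^2 = 16*(4*t^4 + 28*t^3 + 63*t^2 + 4*t + 1)"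
proof -
  define d where "d = 4*x + 56"
  have d0: "d \<noteq> 0" unfolding d_def using x14 by simp
  have "y = -t*d - 8 - 7*x" unfolding t_def d_def using d0 by (simp add: d_def field_simps)
  then have "d*(16*(4*t^4 + 28*t^3 + 63*t^2 + 4*t + 1) - (8*t^2 + 28*t - x)^2)
      = 4*(y^2 - (x^3 + 63*x^2 + 96*x - 160))"
    unfolding d_def by algebra
  then have "d*(16*(4*t^4 + 28*t^3 + 63*t^2 + 4*t + 1) - (8*t^2 + 28*t - x)^2) = 0"
    using W unfolding on_W_def by simp
  then show ?thesis using d0 by simp
qed

lemma ratio_of_param:
  fixes t :: rat
  assumes w0: "1 - t^2 \<noteq> 0"
  defines "r \<equiv> t*(t+4)/(1 - t^2)"
  shows "(2 + t*(r+1))^2 = r^2 + r + 4"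
    and "4*r^2 + r + 1 = (4*t^4 + 28*t^3 + 63*t^2 + 4*t + 1)/(1 - t^2)^2"
    and "(1+r)*t^2 + 4*t - r = 0"
proof -
  define w where "w = 1 - t^2"
  have w0: "w \<noteq> 0" and r: "r = t*(t+4)/w" unfolding w_def r_def using w0 by simp_all
  have "2 + t*(r+1) = (2*w + t*(t*(t+4) + w))/w" unfolding r using w0 by (simp add: field_simps)
  moreover have "(2*w + t*(t*(t+4) + w))^2 = (t*(t+4))^2 + t*(t+4)*w + 4*w^2"
    unfolding w_def by algebra
  moreover have "r^2 + r + 4 = ((t*(t+4))^2 + t*(t+4)*w + 4*w^2)/w^2"
    unfolding r using w0 by (simp add: field_simps power2_eq_square)
  ultimately show "(2 + t*(r+1))^2 = r^2 + r + 4" by (simp add: power_divide)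
  have "4*t^4 + 28*t^3 + 63*t^2 + 4*t + 1 = 4*(t*(t+4))^2 + t*(t+4)*w + w^2"
    unfolding w_def by algebra
  moreover have "4*r^2 + r + 1 = (4*(t*(t+4))^2 + t*(t+4)*w + w^2)/w^2"
    unfolding r using w0 by (simp add: field_simps power2_eq_square)
  ultimately show "4*r^2 + r + 1 = (4*t^4 + 28*t^3 + 63*t^2 + 4*t + 1)/(1 - t^2)^2"
    unfolding w_def by simp
  have "(1+r)*t^2 + 4*t - r = ((w + t*(t+4))*t^2 + 4*t*w - t*(t+4))/w"
    unfolding r using w0 by (simp add: field_simps)
  moreover have "(w + t*(t+4))*t^2 + 4*t*w - t*(t+4) = 0" unfolding w_def by algebra
  ultimately show "(1+r)*t^2 + 4*t - r = 0" by simp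
qed

lemma ratio_of_W_arc_point:
  fixes x y :: rat
  assumes W: "on_W x y" and x4: "4 < x" and x76: "x < 76"
  obtains r where "r > 0" "ratio_squares r" "x \<in> W_abscissae r"
proof -
  define t where "t = -(8 + 7*x + y)/(4*x + 56)"
  define r where "r = t*(t+4)/(1 - t^2)"
  have w0: "1 - t^2 \<noteq> 0" and "r > 0"
    unfolding t_def r_def using W_arc_param_ratio_pos[OF W x4 x76] by simp_all
  have key: "(8*t^2 + 28*t - x)^2 = 16*(4*t^4 + 28*t^3 + 63*t^2 + 4*t + 1)"
    unfolding t_def using W_param_quartic[OF W] x4 by simp
  define v where "v = (8*t^2 + 28*t - x)/(4*(1 - t^2))"
  have "v^2 = (8*t^2 + 28*t - x)^2/(16*(1 - t^2)^2)"
    unfolding v_def by (simp only: power_divide power_mult_distrib) simp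
  also have "\<dots> = (4*t^4 + 28*t^3 + 63*t^2 + 4*t + 1)/(1 - t^2)^2"
    unfolding key by (rule mult_divide_mult_cancel_left) simp
  also have "\<dots> = 4*r^2 + r + 1" unfolding r_def using ratio_of_param(2)[OF w0] by simp
  finally have hv: "v^2 = 4*r^2 + r + 1" .
  have "(2 + t*(r+1))^2 = r^2 + r + 4" "(1+r)*t^2 + 4*t - r = 0"
    unfolding r_def using ratio_of_param(1,3)[OF w0] by simp_all
  moreover have "x = 8*t^2 + 28*t - 4*v*(1 - t^2)" unfolding v_def using w0 by (simp add: field_simps)
  ultimately have "ratio_squares r" "x \<in> W_abscissae r"
    unfolding ratio_squares_def W_abscissae_def using hv by blast+
  with \<open>r > 0\<close> show thesis by (rule that)
qed

section \<open>Chords through (26, \<plusminus>250)\<close>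

(* Abscissa of the third intersection of W with the line through (x, y) and (26, s); for
   s = \<plusminus>250 the latter lies on W.  The constant is 89 = 63 + 26. *)
definition chord_x :: "rat \<Rightarrow> rat \<Rightarrow> rat \<Rightarrow> rat" where
  "chord_x s x y = ((y - s)/(x - 26))^2 - 89 - x"

lemma on_W_chord_x:
  fixes x y s :: rat
  assumes W: "on_W x y" and s2: "s^2 = 62500" and x26: "x \<noteq> 26"
  shows "on_W (chord_x s x y) (s + (y - s)/(x - 26)*(chord_x s x y - 26))"
proof -
  define L where "L = (y - s)/(x - 26)"
  define x' where "x' = chord_x s x y"
  have x': "x' = L^2 - 89 - x" unfolding x'_def L_def chord_x_def ..
  have yL: "y = s + L*(x - 26)" unfolding L_def using x26 by simp
  have "(x-26)*((x'^3 + 63*x'^2 + 96*x' - 160) - (s + L*(x'-26))^2)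
      = (x'-26)*((x^3 + 63*x^2 + 96*x - 160) - (s + L*(x-26))^2)
        - (x'-x)*((26^3 + 63*26^2 + 96*26 - 160) - s^2)"
    unfolding x' by algebra
  also have "\<dots> = 0" using W s2 yL unfolding on_W_def by simp
  finally show ?thesis
    using x26 unfolding on_W_def x'_def[symmetric] L_def[symmetric] by simp
qed

lemma quartic_pos_outside:
  fixes x :: rat
  assumes "(1 \<le> x \<and> x \<le> 2) \<or> x \<ge> 364"
  shows "11*x^4 - 2132*x^3 - 487420*x^2 + 1896192*x + 140224 > 0"
  using assms
proof
  assume x: "1 \<le> x \<and> x \<le> 2"
  have "x^3 \<le> 2^3" using x by (intro power_mono) auto
  then have "x^3 \<le> 8" by simp
  moreover have "x^2 \<le> 2^2" using x by (intro power_mono) auto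
  then have "x^2 \<le> 4" by simp
  moreover have "x^4 \<ge> 0" by simp
  ultimately show ?thesis using x by linarith
next
  assume x: "x \<ge> 364"
  define t where "t = x - 364"
  have t0: "t \<ge> 0" using x unfolding t_def by simp
  have "11*x^4 - 2132*x^3 - 487420*x^2 + 1896192*x + 140224
     = 26392988160 + 921665952*t + 5929172*t^2 + 13884*t^3 + 11*t^4"
    unfolding t_def by algebra
  moreover have "t^2 \<ge> 0" "t^3 \<ge> 0" "t^4 \<ge> 0" using t0 by simp_all
  ultimately show ?thesis using t0 by linarith
qed

lemma chord_sign_cases:
  fixes x :: rat
  assumes "1 \<le> x" and "x < 4 \<or> 76 < x"
  shows "(121*x - 196)*(x - 76)*(x - 4)*(x - 364) < 0
    \<or> 11*x^4 - 2132*x^3 - 487420*x^2 + 1896192*x + 140224 > 0"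
proof (cases "2 < x \<and> x < 364")
  case True
  then have "121*x - 196 > 0" "(x - 76)*(x - 4) > 0" "x - 364 < 0"
    using assms by (auto simp: mult_neg_neg)
  then have "(121*x - 196)*((x - 76)*(x - 4))*(x - 364) < 0" by (simp add: mult_pos_neg)
  then show ?thesis by (simp add: mult.assoc)
next
  case False
  then show ?thesis using assms quartic_pos_outside by auto
qed

lemma chord_x_into_arc:
  fixes x y :: rat
  assumes W: "on_W x y" and x1: "1 \<le> x" and out: "x < 4 \<or> 76 < x"
  obtains s where "s^2 = 62500" "4 < chord_x s x y" "chord_x s x y < 76"
proof -
  have cur: "y^2 = x^3 + 63*x^2 + 96*x - 160" using W unfolding on_W_def .
  have x26: "x \<noteq> 26" using out by auto
  define D where "D = (x - 26)^2"
  define A where "A = 26*x^2 + 4048*x + 2176"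
  (* G s has the sign of (chord_x s x y - 4)(chord_x s x y - 76); the product and the sum of
     G 250 and G (-250) are the two polynomials of chord_sign_cases, up to positive factors. *)
  define G where "G s = (A - 2*s*y - 4*D)*(A - 2*s*y - 76*D)" for s
  have D0: "D > 0" unfolding D_def using x26 by simp
  have chord_G: "(chord_x s x y - 4)*(chord_x s x y - 76) * D^2 = G s" if s2: "s^2 = 62500" for s
  proof -
    have "chord_x s x y * D = (y - s)^2 - (89 + x)*D"
      unfolding chord_x_def D_def using x26 by (simp add: power_divide field_simps)
    also have "\<dots> = A - 2*s*y" unfolding A_def D_def using cur s2 by algebra
    finally have cD: "chord_x s x y * D = A - 2*s*y" .
    show ?thesis unfolding G_def cD[symmetric] by algebra
  qed
  have p1: "(A - 500*y - 4*D)*(A + 500*y - 4*D) = 4*D*(121*x - 196)*(x - 76)"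
    and p2: "(A - 500*y - 76*D)*(A + 500*y - 76*D) = 2500*D*(x - 4)*(x - 364)"
    unfolding A_def D_def using cur by algebra+
  have "G 250 * G (-250)
      = ((A - 500*y - 4*D)*(A + 500*y - 4*D)) * ((A - 500*y - 76*D)*(A + 500*y - 76*D))"
    unfolding G_def by algebra
  also have "\<dots> = 10000*D^2*((121*x - 196)*(x - 76)*(x - 4)*(x - 364))"
    unfolding p1 p2 by (simp add: algebra_simps power2_eq_square)
  finally have prod: "G 250 * G (-250) = 10000*D^2*((121*x - 196)*(x - 76)*(x - 4)*(x - 364))" .
  have sum: "G 250 + G (-250) = -200*(11*x^4 - 2132*x^3 - 487420*x^2 + 1896192*x + 140224)"
    unfolding G_def A_def D_def using cur by algebra
  have "G 250 < 0 \<or> G (-250) < 0"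
  proof (rule ccontr)
    assume "\<not> ?thesis"
    then have G: "G 250 \<ge> 0" "G (-250) \<ge> 0" by auto
    then have "10000*D^2*((121*x - 196)*(x - 76)*(x - 4)*(x - 364)) \<ge> 0"
      unfolding prod[symmetric] by simp
    then have "(121*x - 196)*(x - 76)*(x - 4)*(x - 364) \<ge> 0"
      using D0 by (simp add: zero_le_mult_iff)
    moreover have "11*x^4 - 2132*x^3 - 487420*x^2 + 1896192*x + 140224 \<le> 0"
      using G sum by simp
    ultimately show False using chord_sign_cases[OF x1 out] by linarith
  qed
  then obtain s where s2: "s^2 = 62500" and "G s < 0" by force
  then have "(chord_x s x y - 4)*(chord_x s x y - 76) * D^2 < 0" using chord_G[OF s2] by simp
  then have "(chord_x s x y - 4)*(chord_x s x y - 76) < 0" using D0 by (simp add: mult_less_0_iff)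
  then show thesis using that[OF s2] by (auto simp: mult_less_0_iff)
qed

section \<open>Points of W with distinct 2-adic valuations\<close>

definition has_2adic_val :: "rat \<Rightarrow> int \<Rightarrow> bool" where
  "has_2adic_val q k \<longleftrightarrow> (\<exists>a b :: int. odd a \<and> odd b \<and> q = of_int a / of_int b * 2 powi k)"

lemma has_2adic_val_unique:
  assumes "has_2adic_val q k" and "has_2adic_val q j"
  shows "k = j"
  using assms
proof (induction k j rule: linorder_wlog)
  case (le k j)
  obtain a b where ab: "odd a" "odd b" "q = of_int a / of_int b * 2 powi k"
    using le.prems(1) unfolding has_2adic_val_def by blast
  obtain c d where cd: "odd c" "odd d" "q = of_int c / of_int d * 2 powi j"
    using le.prems(2) unfolding has_2adic_val_def by blast
  define n where "n = nat (j - k)"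
  have "(2::rat) powi j = 2 powi k * 2^n"
    unfolding n_def using le.hyps by (simp add: power_int_add[symmetric] flip: power_int_of_nat)
  then have "of_int a / of_int b * 2 powi k = (of_int c / of_int d * 2^n :: rat) * 2 powi k"
    using ab(3) cd(3) by (simp add: mult_ac)
  moreover have "(2::rat) powi k \<noteq> 0" by simp
  ultimately have "of_int a / of_int b = (of_int c / of_int d * 2^n :: rat)"
    by (metis mult_right_cancel)
  moreover have "(of_int b :: rat) \<noteq> 0" "(of_int d :: rat) \<noteq> 0" using ab(2) cd(2) by auto
  ultimately have "(of_int (a*d) :: rat) = of_int (c*b*2^n)" by (simp add: field_simps)
  then have "a*d = c*b*2^n" by (simp only: of_int_eq_iff)
  moreover have "odd (a*d)" using ab cd by simp
  ultimately have "n = 0" by (cases n) auto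
  then show ?case unfolding n_def using le.hyps by simp
qed (simp add: eq_commute)

definition on_W_jacobian :: "int \<Rightarrow> int \<Rightarrow> int \<Rightarrow> bool" where
  "on_W_jacobian X Y Z \<longleftrightarrow> Y^2 = X^3 + 63*X^2*Z^2 + 96*X*Z^4 - 160*Z^6"

(* Doubling on W in Jacobian coordinates (X : Y : Z), standing for the point (X/Z^2, Y/Z^3). *)
definition W_double :: "int \<times> int \<times> int \<Rightarrow> int \<times> int \<times> int" where
  "W_double = (\<lambda>(X, Y, Z). let X' = X^4 - 192*X^2*Z^4 + 1280*X*Z^6 + 49536*Z^8 in
     (X', (3*X^2 + 126*X*Z^2 + 96*Z^4)*(4*X*Y^2 - X') - 8*Y^4, 2*Y*Z))"

lemma on_W_jacobian_of_int:
  assumes "on_W_jacobian X Y Z"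
  shows "(of_int Y :: 'a :: comm_ring_1)^2
    = of_int X^3 + 63*of_int X^2*of_int Z^2 + 96*of_int X*of_int Z^4 - 160*of_int Z^6"
  using assms unfolding on_W_jacobian_def
  by (metis (mono_tags) of_int_add of_int_diff of_int_mult of_int_numeral of_int_power)

lemma on_W_of_jacobian:
  assumes "on_W_jacobian X Y Z" and "Z \<noteq> 0"
  shows "on_W (of_int X / of_int Z^2) (of_int Y / of_int Z^3)"
proof -
  define x y where "x = (of_int X :: rat)" and "y = (of_int Y :: rat)"
  define z where "z = (of_int Z :: rat)"
  have z0: "z \<noteq> 0" unfolding z_def using assms(2) by simp
  have "y^2 = x^3 + 63*x^2*z^2 + 96*x*z^4 - 160*z^6"
    unfolding x_def y_def z_def using on_W_jacobian_of_int[OF assms(1)] .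
  then have "(y/z^3)^2 = (x^3 + 63*x^2*z^2 + 96*x*z^4 - 160*z^6)/z^6"
    by (simp add: power_divide flip: power_mult)
  also have "\<dots> = (x/z^2)^3 + 63*(x/z^2)^2 + 96*(x/z^2) - 160"
    using z0 by (simp add: field_simps power_divide; algebra)
  finally show ?thesis unfolding on_W_def x_def y_def z_def .
qed

lemma on_W_jacobian_double:
  assumes "on_W_jacobian X Y Z" and "W_double (X, Y, Z) = (X', Y', Z')"
  shows "on_W_jacobian X' Y' Z'"
proof -
  have h: "Y^2 = X^3 + 63*X^2*Z^2 + 96*X*Z^4 - 160*Z^6" using assms(1) unfolding on_W_jacobian_def .
  have e: "Y^4 = (Y^2)^2" "Y^6 = (Y^2)^3" "Y^8 = (Y^2)^4" by simp_all
  have Y': "Y' = (3*X^2 + 126*X*Z^2 + 96*Z^4)*(4*X*Y^2 - X') - 8*Y^4"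
    and X': "X' = X^4 - 192*X^2*Z^4 + 1280*X*Z^6 + 49536*Z^8" and Z': "Z' = 2*Y*Z"
    using assms(2) unfolding W_double_def Let_def by auto
  show ?thesis unfolding on_W_jacobian_def Y' unfolding X' Z'
    by (simp only: power_mult_distrib e h) algebra
qed

lemma W_double_X_ge:
  assumes "on_W_jacobian X Y Z" and "W_double (X, Y, Z) = (X', Y', Z')"
  shows "Z'^2 \<le> X'"
proof -
  have "X' - Z'^2 = (X^4 - 192*X^2*Z^4 + 1280*X*Z^6 + 49536*Z^8) - 4*Z^2*Y^2"
    using assms(2) unfolding W_double_def Let_def by (auto simp: power_mult_distrib)
  also have "\<dots> = (X^2 - 2*X*Z^2 - 224*Z^4)^2"
    using assms(1) unfolding on_W_jacobian_def by algebra
  finally show ?thesis by (metis diff_ge_0_iff_ge zero_le_power2)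
qed

(* 2^n P for P = (-11/4, 45/8). *)
definition doubling_seq :: "nat \<Rightarrow> int \<times> int \<times> int" where
  "doubling_seq n = (W_double ^^ n) (-11, 45, 2)"

lemma doubling_seq_props:
  assumes "doubling_seq n = (X, Y, Z)"
  shows "on_W_jacobian X Y Z \<and> odd X \<and> odd Y \<and> (\<exists>k. odd k \<and> Z = 2^(n+1)*k)"
  using assms
proof (induction n arbitrary: X Y Z)
  case 0
  then show ?case unfolding doubling_seq_def on_W_jacobian_def by (auto intro: exI[of _ 1])
next
  case (Suc n)
  obtain X0 Y0 Z0 where seq: "doubling_seq n = (X0, Y0, Z0)" by (cases "doubling_seq n")
  obtain k where IH: "on_W_jacobian X0 Y0 Z0" "odd X0" "odd Y0" "odd k" "Z0 = 2^(n+1)*k"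
    using Suc.IH[OF seq] by blast
  have dbl: "W_double (X0, Y0, Z0) = (X, Y, Z)"
    using Suc.prems seq unfolding doubling_seq_def by simp
  then have W: "on_W_jacobian X Y Z" by (rule on_W_jacobian_double[OF IH(1)])
  have X: "X = X0^4 - 192*X0^2*Z0^4 + 1280*X0*Z0^6 + 49536*Z0^8" and Z: "Z = 2*Y0*Z0"
    using dbl unfolding W_double_def Let_def by auto
  have "even Z0" using IH(5) by simp
  then have "odd X" unfolding X using IH(2) by simp
  moreover have "even Z" unfolding Z by simp
  ultimately have "odd (Y^2)" using W unfolding on_W_jacobian_def by simp
  moreover have "Z = 2^(Suc n + 1)*(Y0*k)" unfolding Z IH(5) by (simp add: algebra_simps)
  ultimately show ?case using W \<open>odd X\<close> IH(3,4) by auto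
qed

lemma doubling_seq_X_ge:
  assumes "doubling_seq (Suc n) = (X, Y, Z)"
  shows "Z^2 \<le> X"
proof -
  obtain X0 Y0 Z0 where seq: "doubling_seq n = (X0, Y0, Z0)" by (cases "doubling_seq n")
  then have "W_double (X0, Y0, Z0) = (X, Y, Z)"
    using assms unfolding doubling_seq_def by simp
  then show ?thesis using W_double_X_ge doubling_seq_props[OF seq] by blast
qed

lemma chord_x_jacobian:
  fixes X Y Z s :: rat
  assumes W: "Y^2 = X^3 + 63*X^2*Z^2 + 96*X*Z^4 - 160*Z^6" and s2: "s^2 = 62500"
    and Z0: "Z \<noteq> 0" and M0: "X - 26*Z^2 \<noteq> 0"
  shows "chord_x s (X/Z^2) (Y/Z^3) - 26 = Z*(-2*s*Y + 5400*X*Z - 15400*Z^3)/(X - 26*Z^2)^2"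
proof -
  define M where "M = X - 26*Z^2"
  have M0: "M \<noteq> 0" using M0 unfolding M_def .
  have a: "Y/Z^3 - s = (Y - s*Z^3)/Z^3" and b: "X/Z^2 - 26 = M/Z^2"
    unfolding M_def using Z0 by (simp_all add: field_simps)
  have "(Y/Z^3 - s)/(X/Z^2 - 26) = ((Y - s*Z^3)/Z^3)/(M/Z^2)" unfolding a b ..
  also have "\<dots> = (Y - s*Z^3)/(Z*M)"
    using Z0 M0 by (simp add: field_simps power3_eq_cube power2_eq_square)
  finally have slope: "(Y/Z^3 - s)/(X/Z^2 - 26) = (Y - s*Z^3)/(Z*M)" .
  have "chord_x s (X/Z^2) (Y/Z^3) - 26 = ((Y - s*Z^3)^2 - (115*Z^2 + X)*M^2)/(Z^2*M^2)"
    unfolding chord_x_def slope using Z0 M0 by (simp add: field_simps power2_eq_square)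
  also have "(Y - s*Z^3)^2 - (115*Z^2 + X)*M^2 = Z^3*(-2*s*Y + 5400*X*Z - 15400*Z^3)"
    unfolding M_def using W s2 by algebra
  also have "Z^3*(-2*s*Y + 5400*X*Z - 15400*Z^3)/(Z^2*M^2) = Z*(-2*s*Y + 5400*X*Z - 15400*Z^3)/M^2"
    using Z0 M0 by (simp add: power2_eq_square power3_eq_cube)
  finally show ?thesis unfolding M_def .
qed

lemma has_2adic_val_jacobian_x:
  fixes X Z k :: int
  assumes "odd X" "odd k" and Z: "Z = 2^m*k"
  shows "has_2adic_val (of_int X / of_int Z^2 - 26) (-(2*int m))"
proof -
  have "(of_int Z :: rat) \<noteq> 0" using Z assms(2) by auto
  then have "(of_int X / of_int Z^2 - 26 :: rat) = of_int (X - 26*Z^2) / of_int Z^2"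
    by (simp add: field_simps)
  also have "\<dots> = of_int (X - 26*Z^2) / of_int (k^2) * (1 / 2^(2*m))"
    unfolding Z by (simp add: power_mult_distrib power_mult mult.commute)
  also have "1 / 2^(2*m) = (2::rat) powi (-(2*int m))"
    by (simp add: power_int_minus_divide flip: power_int_of_nat)
  finally have "(of_int X / of_int Z^2 - 26 :: rat)
      = of_int (X - 26*Z^2) / of_int (k^2) * 2 powi (-(2*int m))" .
  moreover have "odd (X - 26*Z^2)" "odd (k^2)" using assms by simp_all
  ultimately show ?thesis unfolding has_2adic_val_def by blast
qed

lemma has_2adic_val_chord_x:
  fixes X Y Z k :: int and s :: rat
  assumes W: "on_W_jacobian X Y Z" and "odd X" "odd Y" "odd k" and Z: "Z = 2^m*k" "m \<ge> 1"
    and s2: "s^2 = 62500"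
  shows "has_2adic_val (chord_x s (of_int X / of_int Z^2) (of_int Y / of_int Z^3) - 26) (int m + 2)"
proof -
  obtain e :: int where e: "odd e" "s = 250 * of_int e"
  proof -
    have "(s - 250)*(s + 250) = 0" using s2 by (simp add: algebra_simps power2_eq_square)
    then have "s = 250 * of_int 1 \<or> s = 250 * of_int (-1)" by (auto simp: eq_neg_iff_add_eq_0)
    then show thesis using that[of 1] that[of "-1"] by auto
  qed
  define M where "M = X - 26*Z^2"
  define w where "w = -125*e*Y + 1350*X*Z - 3850*Z^3"
  have "even Z" using Z by simp
  then have odd: "odd M" "odd (k*w)" "odd (M^2)" unfolding M_def w_def using assms e by simp_all
  have "(of_int Y :: rat)^2
      = of_int X^3 + 63*of_int X^2*of_int Z^2 + 96*of_int X*of_int Z^4 - 160*of_int Z^6"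
    using on_W_jacobian_of_int[OF W] .
  moreover have "(of_int Z :: rat) \<noteq> 0" using Z odd by auto
  moreover have "(of_int X - 26 * of_int Z^2 :: rat) \<noteq> 0"
    using odd(1) unfolding M_def
    by (metis (mono_tags) even_zero of_int_0_eq_iff of_int_diff of_int_mult of_int_numeral of_int_power)
  ultimately have "chord_x s (of_int X / of_int Z^2) (of_int Y / of_int Z^3) - 26
      = of_int Z * (4 * of_int w) / of_int (M^2)"
    unfolding w_def M_def using chord_x_jacobian[OF _ s2] e(2) by (simp add: algebra_simps)
  also have "\<dots> = of_int (k*w) / of_int (M^2) * (2^m * 4)"
    unfolding Z by simp
  also have "(2::rat)^m * 4 = 2 powi (int m + 2)" by (simp add: power_int_add)
  finally show ?thesis unfolding has_2adic_val_def using odd by blast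
qed

lemma W_arc_point_of_jacobian:
  fixes X Y Z k :: int
  assumes W: "on_W_jacobian X Y Z" and odd: "odd X" "odd Y" "odd k"
    and Z: "Z = 2^m*k" "m \<ge> 1" and X: "Z^2 \<le> X"
  obtains x where "x \<in> W_arc"
    "has_2adic_val (x - 26) (-(2*int m)) \<or> has_2adic_val (x - 26) (int m + 2)"
proof -
  define x y where "x = (of_int X / of_int Z^2 :: rat)" and "y = (of_int Y / of_int Z^3 :: rat)"
  have Z0: "Z \<noteq> 0" using Z odd by auto
  have Wxy: "on_W x y" unfolding x_def y_def using on_W_of_jacobian[OF W Z0] .
  have val: "has_2adic_val (x - 26) (-(2*int m))"
    unfolding x_def using has_2adic_val_jacobian_x[OF odd(1,3) Z(1)] .
  show thesis
  proof (cases "4 < x \<and> x < 76")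
    case True
    then show thesis using that[of x] Wxy val unfolding W_arc_def by blast
  next
    case False
    have Z2: "(of_int Z :: rat)^2 > 0" using Z0 by simp
    have "(of_int Z :: rat)^2 \<le> of_int X" using X by (metis of_int_le_iff of_int_power)
    then have x1: "1 \<le> x" unfolding x_def using Z2 by simp
    have x_ne: "x \<noteq> of_int (2*c)" for c :: int
    proof
      assume "x = of_int (2*c)"
      then have "(of_int X :: rat) = of_int (2*c) * of_int Z^2"
        unfolding x_def using Z2 by (simp add: divide_eq_eq)
      then have "X = 2*c*Z^2" by (metis of_int_eq_iff of_int_mult of_int_power)
      then show False using odd(1) by simp
    qed
    have "x \<noteq> 4" "x \<noteq> 76" using x_ne[of 2] x_ne[of 38] by simp_all
    with False have "x < 4 \<or> 76 < x" by auto
    then obtain s where s2: "s^2 = 62500" and arc: "4 < chord_x s x y" "chord_x s x y < 76"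
      using chord_x_into_arc[OF Wxy x1] by blast
    have "x \<noteq> 26" using \<open>x < 4 \<or> 76 < x\<close> by auto
    then have "chord_x s x y \<in> W_arc" unfolding W_arc_def using on_W_chord_x[OF Wxy s2] arc by blast
    moreover have "has_2adic_val (chord_x s x y - 26) (int m + 2)"
      unfolding x_def y_def using has_2adic_val_chord_x[OF W odd Z s2] .
    ultimately show thesis using that by blast
  qed
qed

lemma infinite_W_arc: "infinite W_arc"
proof -
  have "\<exists>x. x \<in> W_arc \<and> (\<exists>v \<in> {-(2*int (n+2)), int (n+2) + 2}. has_2adic_val (x - 26) v)" for n
  proof -
    obtain X Y Z where seq: "doubling_seq (Suc n) = (X, Y, Z)" by (cases "doubling_seq (Suc n)")
    obtain k where W: "on_W_jacobian X Y Z" "odd X" "odd Y" "odd k" and Z: "Z = 2^(n+2)*k"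
      using doubling_seq_props[OF seq] by auto
    obtain x where "x \<in> W_arc"
      "has_2adic_val (x - 26) (-(2*int (n+2))) \<or> has_2adic_val (x - 26) (int (n+2) + 2)"
      by (rule W_arc_point_of_jacobian[OF W Z _ doubling_seq_X_ge[OF seq]]) simp
    then show ?thesis by blast
  qed
  then obtain f where f: "\<And>n. f n \<in> W_arc"
    and val: "\<And>n. \<exists>v \<in> {-(2*int (n+2)), int (n+2) + 2}. has_2adic_val (f n - 26) v"
    by metis
  have "inj f"
  proof (rule injI)
    fix n n' assume "f n = f n'"
    then obtain v v' where
      "v \<in> {-(2*int (n+2)), int (n+2) + 2}" "v' \<in> {-(2*int (n'+2)), int (n'+2) + 2}"
      "has_2adic_val (f n - 26) v" "has_2adic_val (f n - 26) v'"
      using val[of n] val[of n'] by auto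
    moreover from this(3,4) have "v = v'" by (rule has_2adic_val_unique)
    ultimately show "n = n'" by auto
  qed
  then have "infinite (range f)" by (simp add: range_inj_infinite)
  then show ?thesis using f by (meson image_subsetI infinite_super)
qed

lemma W_arc_subset_W_abscissae:
  "W_arc \<subseteq> (\<Union>r \<in> {r. r > 1 \<and> ratio_squares r}. W_abscissae r \<union> W_abscissae (1/r))"
proof
  fix x assume "x \<in> W_arc"
  then obtain y where "on_W x y" "4 < x" "x < 76" unfolding W_arc_def by blast
  then obtain r where r: "r > 0" "ratio_squares r" "x \<in> W_abscissae r"
    by (rule ratio_of_W_arc_point)
  have "r \<noteq> 1" using r(2) not_ratio_squares_1 by blast
  show "x \<in> (\<Union>r \<in> {r. r > 1 \<and> ratio_squares r}. W_abscissae r \<union> W_abscissae (1/r))"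
  proof (cases "r > 1")
    case True
    then show ?thesis using r by blast
  next
    case False
    then have "1/r > 1" using r(1) \<open>r \<noteq> 1\<close> by simp
    moreover have "ratio_squares (1/r)" using ratio_squares_inverse r by simp
    ultimately show ?thesis using r(3) by force
  qed
qed

theorem mainTheorem4:
  shows "infinite {r :: rat. r > 1 \<and> good_ratio r}"
proof
  assume "finite {r :: rat. r > 1 \<and> good_ratio r}"
  moreover have "{r. r > 1 \<and> ratio_squares r} \<subseteq> {r. r > 1 \<and> good_ratio r}"
    using good_ratio_if_ratio_squares by blast
  ultimately have "finite {r. r > 1 \<and> ratio_squares r}" by (rule finite_subset[rotated])
  then have "finite (\<Union>r \<in> {r. r > 1 \<and> ratio_squares r}. W_abscissae r \<union> W_abscissae (1/r))"
    by (simp add: finite_W_abscissae)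
  then have "finite W_arc" using W_arc_subset_W_abscissae by (rule finite_subset[rotated])
  then show False using infinite_W_arc by contradiction
qed

end
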